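(* Consider $\min_{x\in X}f(x)$, $f(x)=\mathbb{E}[F(x,\xi)]$, with $F:\mathcal{D}\times\Omega\to\mathbb{R}$, $\mathcal{D}\subseteq\mathbb{R}^n$ open, $X\subset\mathcal{D}$ nonempty closed convex, $F(\cdot,\xi)$ convex on $\mathcal{D}$ for all $\xi$, $\mathbb{E}[F(x,\xi)]$ finite on $\mathcal{D}$. Let $f$ be differentiable over $X$ with $L$-Lipschitz gradient and strongly convex with constant $\eta>0$, let $X$ be compact and $D=\max_{x,y\in X}\|x-y\|$, and assume $\mathbb{E}[\|w_k\|^2\mid\mathcal{F}_k]\le\nu^2$ a.s. for all $k$. Then in the cascading steplength scheme (defined in the context), $K_t$ is finite for all $t\ge0$.
   Context: Iteration: $x_{k+1}=\Pi_X(x_k-\gamma_k(\nabla f(x_k)+w_k))$, $w_k=\nabla_xF(x_k,\xi_k)-\nabla f(x_k)$, $x_0\in X$ random, $\mathcal{F}_k=\{x_0,\xi_0,\dots,\xi_{k-1}\}$, $\mathbb{E}[w_k\mid\mathcal{F}_k]=0$. Cascading steplength scheme: let $q(\gamma)=1-\eta\gamma(2-L\gamma)$, $\theta\in(0,1)$, and an initial $\gamma\in(0,\frac2L)$. Initialization: let $\ell=\min\{j: D^2>\frac{\gamma^2\theta^{2j}\nu^2}{1-q(\gamma\theta^j)}\}$, $\gamma_0=\gamma\theta^\ell$, $q_0=q(\gamma_0)$, $K_0=\max\{k\in\mathbb{Z}_+: q_0^kD^2>\frac{\gamma_0^2\nu^2}{1-q_0}\}$, $\bar K_{-1}=0$.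 For $t\ge1$: $\gamma_t=\theta\gamma_{t-1}$, $q_t=q(\gamma_t)$, and $K_t=\max\{k\in\mathbb{Z}_+: q_t^k\,2^t\big(\prod_{j=0}^{t-1}q_j^{K_j}\big)D^2>\frac{\gamma_t^2\nu^2}{1-q_t}\}$. With $\bar K_t=\sum_{j=0}^tK_j$, the stepsize is $\gamma_k=\gamma_t$ for $k=\bar K_{t-1}+1,\dots,\bar K_t$. *)

theory Defs
  imports "HOL-Analysis.Analysis"
begin

definition strongly_convex_on :: "'a::real_normed_vector set \<Rightarrow> real \<Rightarrow> ('a \<Rightarrow> real) \<Rightarrow> bool" where
  "strongly_convex_on S eta f \<longleftrightarrow>
     (\<forall>x\<in>S. \<forall>y\<in>S. \<forall>t::real. 0 \<le> t \<and> t \<le> 1 \<longrightarrow>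
        f (t *\<^sub>R x + (1 - t) *\<^sub>R y)
          \<le> t * f x + (1 - t) * f y - eta / 2 * t * (1 - t) * (norm (x - y))\<^sup>2)"

definition qf :: "real \<Rightarrow> real \<Rightarrow> real \<Rightarrow> real" where
  "qf eta L g = 1 - eta * g * (2 - L * g)"

definition ell_cond :: "real \<Rightarrow> real \<Rightarrow> real \<Rightarrow> real \<Rightarrow> real \<Rightarrow> real \<Rightarrow> nat \<Rightarrow> bool" where
  "ell_cond eta L gam theta D nu j \<longleftrightarrow>
     D\<^sup>2 > gam\<^sup>2 * theta ^ (2 * j) * nu\<^sup>2 / (1 - qf eta L (gam * theta ^ j))"

definition ell :: "real \<Rightarrow> real \<Rightarrow> real \<Rightarrow> real \<Rightarrow> real \<Rightarrow> real \<Rightarrow> nat" where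
  "ell eta L gam theta D nu = (LEAST j. ell_cond eta L gam theta D nu j)"

text \<open>gamma_t = theta^t gamma_0 = gamma theta^(ell + t).\<close>
definition gam_t :: "real \<Rightarrow> real \<Rightarrow> real \<Rightarrow> real \<Rightarrow> real \<Rightarrow> real \<Rightarrow> nat \<Rightarrow> real" where
  "gam_t eta L gam theta D nu t = gam * theta ^ (ell eta L gam theta D nu + t)"

definition q_t :: "real \<Rightarrow> real \<Rightarrow> real \<Rightarrow> real \<Rightarrow> real \<Rightarrow> real \<Rightarrow> nat \<Rightarrow> real" where
  "q_t eta L gam theta D nu t = qf eta L (gam_t eta L gam theta D nu t)"

text \<open>The set of admissible k at stage t, given P = prod_{j<t} q_j^{K_j}.
  For t = 0 (P = 1, 2^0 = 1) this is exactly the set defining K_0.\<close>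
definition Kset :: "real \<Rightarrow> real \<Rightarrow> real \<Rightarrow> real \<Rightarrow> real \<Rightarrow> real \<Rightarrow> real \<Rightarrow> nat \<Rightarrow> nat set" where
  "Kset eta L gam theta D nu P t =
     {k::nat. q_t eta L gam theta D nu t ^ k * 2 ^ t * P * D\<^sup>2
        > (gam_t eta L gam theta D nu t)\<^sup>2 * nu\<^sup>2 / (1 - q_t eta L gam theta D nu t)}"

primrec Pcasc :: "real \<Rightarrow> real \<Rightarrow> real \<Rightarrow> real \<Rightarrow> real \<Rightarrow> real \<Rightarrow> nat \<Rightarrow> real" where
  "Pcasc eta L gam theta D nu 0 = 1"
| "Pcasc eta L gam theta D nu (Suc t) =
     Pcasc eta L gam theta D nu t * q_t eta L gam theta D nu t
       ^ Max (Kset eta L gam theta D nu (Pcasc eta L gam theta D nu t) t)"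

definition Kcasc :: "real \<Rightarrow> real \<Rightarrow> real \<Rightarrow> real \<Rightarrow> real \<Rightarrow> real \<Rightarrow> nat \<Rightarrow> nat set" where
  "Kcasc eta L gam theta D nu t = Kset eta L gam theta D nu (Pcasc eta L gam theta D nu t) t"

end

theory Submission
  imports Defs
begin

text \<open>Let \<open>\<tau>(\<gamma>) = \<gamma>\<^sup>2\<nu>\<^sup>2 / (1 - q(\<gamma>)) = \<gamma>\<nu>\<^sup>2 / (\<eta>(2 - L\<gamma>))\<close>, the right-hand side in the
  definitions of \<open>\<ell>\<close> and \<open>K\<^sub>t\<close>. Comparing strong convexity with the Lipschitz bound on the
  gradient at a midpoint gives \<open>\<eta> \<le> L\<close>, hence \<open>0 \<le> q(\<gamma>) < 1\<close> for \<open>0 < \<gamma> < 2/L\<close>; so at each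
  stage only finitely many \<open>k\<close> satisfy \<open>q\<^sub>t\<^sup>k C > \<tau>(\<gamma>\<^sub>t)\<close>. Since \<open>\<tau>\<close> is increasing and tends to 0
  with \<open>\<gamma>\<close>, \<open>\<ell>\<close> exists, and \<open>k = 0\<close> remains admissible at every stage: the maximal \<open>K\<^sub>t\<close>
  still satisfies the stage-\<open>t\<close> inequality, and passing to stage \<open>t + 1\<close> doubles the left side
  while \<open>\<tau>(\<theta>\<gamma>\<^sub>t) \<le> \<tau>(\<gamma>\<^sub>t)\<close>.\<close>

lemma Lipschitz_gradient_midpoint_gap:
  fixes f :: "'a::real_inner \<Rightarrow> real" and gradf :: "'a \<Rightarrow> 'a"
  assumes S: "convex S" and xS: "x \<in> S" and yS: "y \<in> S"
    and f_grad: "\<forall>x\<in>S. (f has_derivative (\<lambda>h. gradf x \<bullet> h)) (at x)"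
    and grad_lip: "\<forall>x\<in>S. \<forall>y\<in>S. norm (gradf x - gradf y) \<le> L * norm (x - y)"
  shows "f x + f y - 2 * f ((1/2) *\<^sub>R x + (1/2) *\<^sub>R y) \<le> L / 4 * (norm (x - y))\<^sup>2"
proof -
  define d where "d = norm (x - y)"
  define p where "p t = y + t *\<^sub>R (x - y)" for t
  have p_convex_comb: "p t = t *\<^sub>R x + (1 - t) *\<^sub>R y" for t
    by (simp add: p_def algebra_simps)
  have pS: "p t \<in> S" if "t \<in> {0..1}" for t
    using that S xS yS unfolding p_convex_comb convex_def by auto
  have p_deriv: "(p has_derivative (\<lambda>s. s *\<^sub>R (x - y))) (at t)" for t
    unfolding p_def by (auto intro!: derivative_eq_intros)
  have fp_deriv: "((\<lambda>t. f (p t)) has_real_derivative (gradf (p t) \<bullet> (x - y))) (at t)"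
    if "t \<in> {0..1}" for t
  proof -
    have "((\<lambda>t. f (p t)) has_derivative (\<lambda>s. gradf (p t) \<bullet> (s *\<^sub>R (x - y)))) (at t)"
      using diff_chain_at[OF p_deriv, of f "\<lambda>h. gradf (p t) \<bullet> h"] f_grad pS[OF that]
      by (simp add: o_def)
    moreover have "(\<lambda>s. gradf (p t) \<bullet> (s *\<^sub>R (x - y))) = (*) (gradf (p t) \<bullet> (x - y))"
      by (auto simp: mult.commute)
    ultimately show ?thesis unfolding has_field_derivative_def by simp
  qed
  text \<open>The Lipschitz bound makes the derivative of \<open>\<psi>\<close> nondecreasing, and the midpoint
    inequality for the convex \<open>\<psi>\<close> is the claim.\<close>
  define \<psi> where "\<psi> t = L * d\<^sup>2 * t\<^sup>2 / 2 - f (p t)" for t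
  have \<psi>_convex: "convex_on {0..1} \<psi>"
  proof (rule convex_on_realI[where f'="\<lambda>t. L * d\<^sup>2 * t - gradf (p t) \<bullet> (x - y)"])
    show "connected {0..1::real}" by simp
    fix t :: real assume t: "t \<in> {0..1}"
    show "(\<psi> has_real_derivative L * d\<^sup>2 * t - gradf (p t) \<bullet> (x - y)) (at t)"
      unfolding \<psi>_def by (rule derivative_eq_intros fp_deriv[OF t] refl | simp)+
  next
    fix t s :: real assume t: "t \<in> {0..1}" and s: "s \<in> {0..1}" and ts: "t \<le> s"
    have "(gradf (p s) - gradf (p t)) \<bullet> (x - y) \<le> norm (gradf (p s) - gradf (p t)) * d"
      unfolding d_def by (rule norm_cauchy_schwarz)
    also have "\<dots> \<le> L * norm (p s - p t) * d"
      using grad_lip pS[OF s] pS[OF t] by (intro mult_right_mono) (auto simp: d_def)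
    also have "p s - p t = (s - t) *\<^sub>R (x - y)"
      by (simp add: p_def algebra_simps)
    also have "norm ((s - t) *\<^sub>R (x - y)) = (s - t) * d"
      using ts by (simp add: d_def)
    finally show "L * d\<^sup>2 * t - gradf (p t) \<bullet> (x - y) \<le> L * d\<^sup>2 * s - gradf (p s) \<bullet> (x - y)"
      by (simp add: inner_diff_left power2_eq_square algebra_simps)
  qed
  have "\<psi> ((1 - 1/2) *\<^sub>R 0 + (1/2) *\<^sub>R 1) \<le> (1 - 1/2) * \<psi> 0 + (1/2) * \<psi> 1"
    by (rule convex_onD[OF \<psi>_convex]) auto
  then show ?thesis
    by (simp add: \<psi>_def p_convex_comb d_def power_divide field_simps)
qed

lemma strongly_convex_modulus_le_Lipschitz_constant:
  fixes f :: "'a::real_inner \<Rightarrow> real" and gradf :: "'a \<Rightarrow> 'a"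
  assumes S: "convex S" and xS: "x \<in> S" and yS: "y \<in> S" and "x \<noteq> y"
    and f_grad: "\<forall>x\<in>S. (f has_derivative (\<lambda>h. gradf x \<bullet> h)) (at x)"
    and grad_lip: "\<forall>x\<in>S. \<forall>y\<in>S. norm (gradf x - gradf y) \<le> L * norm (x - y)"
    and f_strong: "strongly_convex_on S eta f"
  shows "eta \<le> L"
proof -
  have "\<forall>t. 0 \<le> t \<and> t \<le> 1 \<longrightarrow> f (t *\<^sub>R x + (1 - t) *\<^sub>R y)
      \<le> t * f x + (1 - t) * f y - eta / 2 * t * (1 - t) * (norm (x - y))\<^sup>2"
    using f_strong xS yS unfolding strongly_convex_on_def by blast
  from this[rule_format, of "1/2"]
  have "f ((1/2) *\<^sub>R x + (1/2) *\<^sub>R y) \<le> f x / 2 + f y / 2 - eta / 8 * (norm (x - y))\<^sup>2"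
    by simp
  then have "eta / 4 * (norm (x - y))\<^sup>2 \<le> L / 4 * (norm (x - y))\<^sup>2"
    using Lipschitz_gradient_midpoint_gap[OF S xS yS f_grad grad_lip] by simp
  then show ?thesis
    using \<open>x \<noteq> y\<close> by simp
qed

lemma one_minus_qf: "1 - qf eta L g = eta * g * (2 - L * g)"
  by (simp add: qf_def)

lemma qf_nonneg:
  assumes "eta \<le> L" "0 \<le> g" "L * g \<le> 2"
  shows "0 \<le> qf eta L g"
proof -
  have "eta * g * (2 - L * g) \<le> L * g * (2 - L * g)"
    using assms by (intro mult_right_mono) auto
  also have "\<dots> = 1 - (1 - L * g)\<^sup>2"
    by (simp add: power2_eq_square algebra_simps)
  finally show ?thesis
    using one_minus_qf[of eta L g] zero_le_power2[of "1 - L * g"] by linarith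
qed

lemma qf_less_one:
  assumes "0 < eta" "0 < g" "L * g < 2"
  shows "qf eta L g < 1"
  using assms by (simp add: qf_def)

lemma finite_geometric_superlevel:
  fixes q C R :: real
  assumes "\<bar>q\<bar> < 1" "0 < R"
  shows "finite {k::nat. R < q ^ k * C}"
proof -
  have "(\<lambda>k. q ^ k * C) \<longlonglongrightarrow> 0 * C"
    using assms by (intro tendsto_mult LIMSEQ_power_zero tendsto_const) auto
  then have "eventually (\<lambda>k. q ^ k * C < R) sequentially"
    using assms by (simp add: order_tendstoD(2))
  then have "finite {k. \<not> q ^ k * C < R}"
    by (simp add: eventually_cofinite flip: cofinite_eq_sequentially)
  then show ?thesis
    by (rule finite_subset[rotated]) auto
qed

definition stage_threshold :: "real \<Rightarrow> real \<Rightarrow> real \<Rightarrow> real \<Rightarrow> real" where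
  "stage_threshold eta L nu g = g\<^sup>2 * nu\<^sup>2 / (1 - qf eta L g)"

lemma stage_threshold_eq:
  assumes "0 < g"
  shows "stage_threshold eta L nu g = g * nu\<^sup>2 / (eta * (2 - L * g))"
  using assms by (simp add: stage_threshold_def one_minus_qf power2_eq_square)

lemma stage_threshold_pos:
  assumes "0 < eta" "0 < g" "L * g < 2" "nu \<noteq> 0"
  shows "0 < stage_threshold eta L nu g"
  using assms by (simp add: stage_threshold_eq)

lemma stage_threshold_mono:
  assumes "0 < eta" "0 \<le> L" "0 < g" "g \<le> g'" "L * g' < 2"
  shows "stage_threshold eta L nu g \<le> stage_threshold eta L nu g'"
proof -
  have "L * g \<le> L * g'"
    using assms by (simp add: mult_left_mono)
  then show ?thesis
    using assms by (simp add: stage_threshold_eq frac_le mult_left_mono mult_right_mono)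
qed

lemma stage_threshold_tendsto_zero:
  assumes "0 < eta" "0 < g" "0 < theta" "theta < 1"
  shows "(\<lambda>j. stage_threshold eta L nu (g * theta ^ j)) \<longlonglongrightarrow> 0"
proof -
  have "(\<lambda>j. g * theta ^ j * nu\<^sup>2 / (eta * (2 - L * (g * theta ^ j))))
      \<longlonglongrightarrow> g * 0 * nu\<^sup>2 / (eta * (2 - L * (g * 0)))"
    using assms by (intro tendsto_intros LIMSEQ_power_zero) auto
  then show ?thesis
    using assms by (simp add: stage_threshold_eq)
qed

lemma ell_cond_iff:
  "ell_cond eta L gam theta D nu j \<longleftrightarrow> stage_threshold eta L nu (gam * theta ^ j) < D\<^sup>2"
  by (simp add: ell_cond_def stage_threshold_def power_mult_distrib power_mult mult.commute)

lemma ell_cond_exists: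
  assumes "0 < eta" "0 < gam" "0 < theta" "theta < 1" "D \<noteq> 0"
  shows "\<exists>j. ell_cond eta L gam theta D nu j"
proof -
  have "eventually (\<lambda>j. stage_threshold eta L nu (gam * theta ^ j) < D\<^sup>2) sequentially"
    using assms by (intro order_tendstoD(2)[OF stage_threshold_tendsto_zero]) auto
  then show ?thesis
    unfolding ell_cond_iff by (meson eventually_sequentially order_refl)
qed

lemma gam_t_admissible:
  assumes "0 \<le> L" "0 < gam" "L * gam < 2" "0 < theta" "theta \<le> 1"
  shows "0 < gam_t eta L gam theta D nu t" "L * gam_t eta L gam theta D nu t < 2"
proof -
  have "gam_t eta L gam theta D nu t \<le> gam"
    using assms by (simp add: gam_t_def mult_right_le_one_le power_le_one)
  then have "L * gam_t eta L gam theta D nu t \<le> L * gam"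
    using assms by (intro mult_left_mono) auto
  with assms show "0 < gam_t eta L gam theta D nu t" "L * gam_t eta L gam theta D nu t < 2"
    by (simp add: gam_t_def, linarith)
qed

lemma gam_t_Suc: "gam_t eta L gam theta D nu (Suc t) = theta * gam_t eta L gam theta D nu t"
  by (simp add: gam_t_def)

lemma mem_Kset_iff:
  "k \<in> Kset eta L gam theta D nu P t \<longleftrightarrow>
     stage_threshold eta L nu (gam_t eta L gam theta D nu t)
       < q_t eta L gam theta D nu t ^ k * 2 ^ t * P * D\<^sup>2"
  by (simp add: Kset_def stage_threshold_def q_t_def)

lemma finite_Kset:
  assumes "0 < eta" "eta \<le> L" "0 < gam" "L * gam < 2" "0 < theta" "theta \<le> 1" "nu \<noteq> 0"
  shows "finite (Kset eta L gam theta D nu P t)"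
proof -
  let ?g = "gam_t eta L gam theta D nu t"
  have g: "0 < ?g" "L * ?g < 2"
    using assms by (intro gam_t_admissible; linarith)+
  have "\<bar>q_t eta L gam theta D nu t\<bar> < 1"
    using assms g qf_nonneg[of eta L ?g] qf_less_one[of eta ?g L] by (simp add: q_t_def)
  then have "finite {k. stage_threshold eta L nu ?g
      < q_t eta L gam theta D nu t ^ k * (2 ^ t * P * D\<^sup>2)}"
    using assms g by (intro finite_geometric_superlevel stage_threshold_pos) auto
  moreover have "Kset eta L gam theta D nu P t = {k. stage_threshold eta L nu ?g
      < q_t eta L gam theta D nu t ^ k * (2 ^ t * P * D\<^sup>2)}"
    by (auto simp: mem_Kset_iff mult.assoc)
  ultimately show ?thesis
    by simp
qed

lemma zero_mem_Kcasc:
  assumes "0 < eta" "eta \<le> L" "0 < gam" "L * gam < 2" "0 < theta" "theta \<le> 1" "nu \<noteq> 0"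
    and ell_exists: "\<exists>j. ell_cond eta L gam theta D nu j"
  shows "0 \<in> Kcasc eta L gam theta D nu t"
proof (induction t)
  case 0
  have "ell_cond eta L gam theta D nu (ell eta L gam theta D nu)"
    unfolding ell_def using ell_exists by (rule LeastI_ex)
  then show ?case
    by (simp add: Kcasc_def mem_Kset_iff ell_cond_iff gam_t_def)
next
  case (Suc t)
  let ?g = "gam_t eta L gam theta D nu t"
  let ?q = "q_t eta L gam theta D nu t"
  let ?P = "Pcasc eta L gam theta D nu t"
  define K where "K = Max (Kcasc eta L gam theta D nu t)"
  have g: "0 < ?g" "L * ?g < 2"
    using assms by (intro gam_t_admissible; linarith)+
  have "K \<in> Kcasc eta L gam theta D nu t"
    using Suc finite_Kset[OF assms(1-7)] unfolding K_def Kcasc_def by (intro Max_in) auto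
  then have "stage_threshold eta L nu ?g < ?q ^ K * 2 ^ t * ?P * D\<^sup>2"
    by (simp add: Kcasc_def mem_Kset_iff)
  moreover have "stage_threshold eta L nu (theta * ?g) \<le> stage_threshold eta L nu ?g"
    using assms g by (intro stage_threshold_mono) (auto simp: mult_left_le_one_le)
  moreover have "0 < stage_threshold eta L nu ?g"
    using assms g by (intro stage_threshold_pos)
  ultimately have "stage_threshold eta L nu (theta * ?g) < 2 * (?q ^ K * 2 ^ t * ?P * D\<^sup>2)"
    by linarith
  then show ?case
    by (simp add: Kcasc_def mem_Kset_iff gam_t_Suc K_def mult_ac)
qed

theorem proposition6:
  fixes f :: "'a::euclidean_space \<Rightarrow> real"
    and gradf :: "'a \<Rightarrow> 'a"
    and Dom X :: "'a set"
    and L eta gam theta nu D :: real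
  assumes Dom_open: "open Dom"
    and X_sub: "X \<subseteq> Dom"
    and X_ne: "X \<noteq> {}"
    and X_closed: "closed X"
    and X_convex: "convex X"
    and X_compact: "compact X"
    and f_convex: "convex_on Dom f"
    and f_grad: "\<forall>x\<in>X. (f has_derivative (\<lambda>h. gradf x \<bullet> h)) (at x)"
    and L_pos: "L > 0"
    and grad_lip: "\<forall>x\<in>X. \<forall>y\<in>X. norm (gradf x - gradf y) \<le> L * norm (x - y)"
    and eta_pos: "eta > 0"
    and f_strong: "strongly_convex_on X eta f"
    and D_def: "D = diameter X"
    and D_pos: "D > 0"
    and nu_pos: "nu > 0"
    and theta: "0 < theta" "theta < 1"
    and gam: "0 < gam" "gam < 2 / L"
  shows "(\<exists>j. ell_cond eta L gam theta D nu j)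
       \<and> (\<forall>t. finite (Kcasc eta L gam theta D nu t) \<and> Kcasc eta L gam theta D nu t \<noteq> {})"
proof -
  obtain x where x: "x \<in> X"
    using X_ne by blast
  have "\<exists>y\<in>X. y \<noteq> x"
  proof (rule ccontr)
    assume "\<not> (\<exists>y\<in>X. y \<noteq> x)"
    then have "X = {x}"
      using x by blast
    then show False
      using D_pos D_def by simp
  qed
  then obtain y where xy: "x \<in> X" "y \<in> X" "x \<noteq> y"
    using x by blast
  have eta_le_L: "eta \<le> L"
    using strongly_convex_modulus_le_Lipschitz_constant[OF X_convex xy f_grad grad_lip f_strong] .
  have L_gam: "L * gam < 2"
    using gam L_pos by (simp add: field_simps)
  have ell_exists: "\<exists>j. ell_cond eta L gam theta D nu j"
    using eta_pos gam theta D_pos by (intro ell_cond_exists) auto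
  have params: "0 < eta" "eta \<le> L" "0 < gam" "L * gam < 2" "0 < theta" "theta \<le> 1" "nu \<noteq> 0"
    using eta_pos eta_le_L gam L_gam theta nu_pos by auto
  show ?thesis
  proof (intro conjI allI)
    fix t
    show "finite (Kcasc eta L gam theta D nu t)"
      unfolding Kcasc_def using params by (rule finite_Kset)
    show "Kcasc eta L gam theta D nu t \<noteq> {}"
      using zero_mem_Kcasc[OF params ell_exists] by blast
  qed (rule ell_exists)
qed

end
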